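(* Let $(U,\mathcal{S})$ be a set system with $|\mathcal{S}|=m$, let $\epsilon\in(0,1)$, $0<\delta<1/e$, and $\epsilon'=\epsilon/(2\ln(e/\delta))$. Consider the algorithm that, on a private set $R\subseteq U$, sets $R_1=R$, $\mathcal{S}_1=\mathcal{S}$ and for $i=1,\dots,m$: picks a set $S\in\mathcal{S}_i$ with probability proportional to $\exp(\epsilon'|S\cap R_i|)$, outputs $S$, and sets $R_{i+1}=R_i\setminus S$, $\mathcal{S}_{i+1}=\mathcal{S}_i\setminus\{S\}$ (so the output is a permutation of $\mathcal{S}$). Then this algorithm is $(\epsilon,\delta)$-differentially private: for any $A,B\subseteq U$ with symmetric difference of size one and any set $\mathcal{P}$ of outputs, $\Pr[M(A)\in\mathcal{P}]\le e^{\epsilon}\Pr[M(B)\in\mathcal{P}]+\delta$. *)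

theory Defs
  imports Complex_Main
begin

fun seq_prob :: "real \<Rightarrow> 'a set \<Rightarrow> 'a set set \<Rightarrow> 'a set list \<Rightarrow> real" where
  "seq_prob e R F [] = (if F = {} then 1 else 0)"
| "seq_prob e R F (S # Ss) =
     (if S \<in> F then
        exp (e * real (card (S \<inter> R))) / (\<Sum>T\<in>F. exp (e * real (card (T \<inter> R))))
        * seq_prob e (R - S) (F - {S}) Ss
      else 0)"

definition outputs :: "'a set set \<Rightarrow> 'a set list set" where
  "outputs F = {xs. distinct xs \<and> set xs = F}"

definition mech_prob :: "real \<Rightarrow> 'a set set \<Rightarrow> 'a set \<Rightarrow> 'a set list set \<Rightarrow> real" where
  "mech_prob e F R P = (\<Sum>xs\<in>P \<inter> outputs F. seq_prob e R F xs)"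

end

theory Submission imports Defs begin

text \<open>Adding a point \<open>x\<close> to the private set multiplies every selection weight by at most
  \<open>exp \<epsilon>'\<close>, so by induction over the steps every output becomes at most \<open>exp \<epsilon>'\<close> times
  more likely. The converse direction is not pure. With \<open>a = exp \<epsilon>' - 1\<close> one shows, for every
  \<open>K > 0\<close> and by induction on the number of remaining sets,
  \<open>Pr[M(R) \<in> P] \<le> K Pr[M(R \<union> {x}) \<in> P] + K powr (-1/a)\<close>.
  If the first chosen set contains \<open>x\<close>, both runs continue identically; otherwise they still
  differ in \<open>x\<close>, and the induction hypothesis is applied with the smaller constant \<open>K / (1 + a p)\<close>,
  where \<open>p\<close> is the relative weight of the sets containing \<open>x\<close>; this exactly absorbs the change of
  the normalising sum. The additive loss \<open>(1 - p) (K / (1 + a p)) powr (-1/a)\<close> stays below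
  \<open>K powr (-1/a)\<close> because \<open>(1 + a p) powr (1/a) \<le> exp p \<le> 1 / (1 - p)\<close>. Finally \<open>K = exp \<epsilon>\<close>,
  and the choice of \<open>\<epsilon>'\<close> makes \<open>K powr (-1/a) \<le> \<delta>\<close>.\<close>

lemma finite_outputs: "finite F \<Longrightarrow> finite (outputs F)"
proof -
  assume "finite F"
  have "outputs F \<subseteq> {xs. set xs \<subseteq> F \<and> length xs \<le> card F}"
    unfolding outputs_def using distinct_card by fastforce
  thus ?thesis using finite_lists_length_le[OF \<open>finite F\<close>] finite_subset by blast
qed

lemma outputs_empty: "outputs {} = {[]}"
  by (auto simp: outputs_def)

lemma outputs_hd_eq_image_Cons:
  assumes "S \<in> F"
  shows "{xs \<in> P \<inter> outputs F. hd xs = S} = Cons S ` ({ys. S # ys \<in> P} \<inter> outputs (F - {S}))"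
proof (intro equalityI subsetI)
  fix xs assume "xs \<in> {xs \<in> P \<inter> outputs F. hd xs = S}"
  then have xs: "xs \<in> P" "distinct xs" "set xs = F" "hd xs = S" by (auto simp: outputs_def)
  then obtain ys where "xs = S # ys" using assms by (cases xs) auto
  with xs show "xs \<in> Cons S ` ({ys. S # ys \<in> P} \<inter> outputs (F - {S}))"
    unfolding outputs_def by auto
next
  fix xs assume "xs \<in> Cons S ` ({ys. S # ys \<in> P} \<inter> outputs (F - {S}))"
  then obtain ys where "xs = S # ys" "S # ys \<in> P" "distinct ys" "set ys = F - {S}"
    unfolding outputs_def by blast
  with assms show "xs \<in> {xs \<in> P \<inter> outputs F. hd xs = S}"
    unfolding outputs_def by auto
qed

definition em_weight :: "real \<Rightarrow> 'a set \<Rightarrow> 'a set \<Rightarrow> real" where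
  "em_weight e R S = exp (e * real (card (S \<inter> R)))"

lemma em_weight_pos: "em_weight e R S > 0"
  by (simp add: em_weight_def)

lemma em_weight_insert:
  assumes "finite R" "x \<notin> R"
  shows "em_weight e (insert x R) S = (if x \<in> S then exp e * em_weight e R S else em_weight e R S)"
proof (cases "x \<in> S")
  case True
  then have "card (S \<inter> insert x R) = Suc (card (S \<inter> R))"
    using assms by (simp add: Int_insert_right)
  then show ?thesis
    using True by (simp add: em_weight_def ring_distribs exp_add mult.commute)
qed (simp add: em_weight_def)

lemma sum_em_weight_pos: "finite F \<Longrightarrow> F \<noteq> {} \<Longrightarrow> sum (em_weight e R) F > 0"
  by (intro sum_pos) (auto simp: em_weight_pos)

lemma mech_prob_empty_family: "mech_prob e {} R P = (if [] \<in> P then 1 else 0)"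
  by (simp add: mech_prob_def outputs_empty)

lemma mech_prob_first_step:
  assumes "finite F" "F \<noteq> {}"
  shows "mech_prob e F R P = (\<Sum>S\<in>F. em_weight e R S / sum (em_weight e R) F *
            mech_prob e (F - {S}) (R - S) {ys. S # ys \<in> P})"
proof -
  have fin: "finite (P \<inter> outputs F)" using finite_outputs[OF assms(1)] by auto
  have hd_in: "hd ` (P \<inter> outputs F) \<subseteq> F"
  proof
    fix S assume "S \<in> hd ` (P \<inter> outputs F)"
    then obtain xs where "xs \<in> outputs F" "S = hd xs" by blast
    then show "S \<in> F" using assms(2) by (cases xs) (auto simp: outputs_def)
  qed
  have "mech_prob e F R P = (\<Sum>S\<in>F. \<Sum>xs\<in>{xs \<in> P \<inter> outputs F. hd xs = S}. seq_prob e R F xs)"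
    unfolding mech_prob_def using sum.group[OF fin assms(1) hd_in, of "seq_prob e R F"] by simp
  also have "\<dots> = (\<Sum>S\<in>F. \<Sum>ys\<in>{ys. S # ys \<in> P} \<inter> outputs (F - {S}). seq_prob e R F (S # ys))"
  proof (rule sum.cong[OF refl])
    fix S assume "S \<in> F"
    show "(\<Sum>xs\<in>{xs \<in> P \<inter> outputs F. hd xs = S}. seq_prob e R F xs)
        = (\<Sum>ys\<in>{ys. S # ys \<in> P} \<inter> outputs (F - {S}). seq_prob e R F (S # ys))"
      unfolding outputs_hd_eq_image_Cons[OF \<open>S \<in> F\<close>] by (subst sum.reindex) (auto simp: inj_on_def)
  qed
  also have "\<dots> = (\<Sum>S\<in>F. em_weight e R S / sum (em_weight e R) F *
            mech_prob e (F - {S}) (R - S) {ys. S # ys \<in> P})"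
    by (intro sum.cong refl) (simp add: mech_prob_def em_weight_def sum_distrib_left)
  finally show ?thesis .
qed

lemma seq_prob_nonneg: "seq_prob e R F xs \<ge> 0"
  by (induction xs arbitrary: R F) (auto intro!: mult_nonneg_nonneg divide_nonneg_nonneg sum_nonneg)

lemma mech_prob_nonneg: "mech_prob e F R P \<ge> 0"
  unfolding mech_prob_def by (simp add: sum_nonneg seq_prob_nonneg)

lemma mech_prob_le_1:
  assumes "finite F"
  shows "mech_prob e F R P \<le> 1"
  using assms
proof (induction "card F" arbitrary: F R P rule: less_induct)
  case less
  show ?case
  proof (cases "F = {}")
    case True then show ?thesis by (simp add: mech_prob_empty_family)
  next
    case False
    let ?Z = "sum (em_weight e R) F"
    have "mech_prob e F R P = (\<Sum>S\<in>F. em_weight e R S / ?Z *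
            mech_prob e (F - {S}) (R - S) {ys. S # ys \<in> P})"
      by (rule mech_prob_first_step[OF less.prems False])
    also have "\<dots> \<le> (\<Sum>S\<in>F. em_weight e R S / ?Z)"
    proof (intro sum_mono mult_right_le_one_le)
      fix S assume "S \<in> F"
      then have "card (F - {S}) < card F" using less.prems by (intro card_Diff1_less)
      then show "mech_prob e (F - {S}) (R - S) {ys. S # ys \<in> P} \<le> 1"
        using less.prems by (intro less.hyps) auto
    qed (auto intro!: divide_nonneg_nonneg sum_nonneg less_imp_le[OF em_weight_pos]
              simp: mech_prob_nonneg)
    also have "\<dots> = 1"
      using sum_em_weight_pos[OF less.prems False, of e R] by (simp add: sum_divide_distrib[symmetric])
    finally show ?thesis .
  qed
qed

lemma mech_prob_insert_le:
  assumes "finite F" "finite R" "x \<notin> R" "0 \<le> e"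
  shows "mech_prob e F (insert x R) P \<le> exp e * mech_prob e F R P"
  using assms
proof (induction "card F" arbitrary: F R P rule: less_induct)
  case less
  show ?case
  proof (cases "F = {}")
    case True
    then show ?thesis
      using less.prems(4) mech_prob_nonneg[of e F R P] by (simp add: mech_prob_empty_family)
  next
    case False
    let ?Z = "sum (em_weight e R) F" and ?Z' = "sum (em_weight e (insert x R)) F"
    let ?M = "\<lambda>R S. mech_prob e (F - {S}) (R - S) {ys. S # ys \<in> P}"
    have Z: "?Z > 0" using sum_em_weight_pos[OF less.prems(1) False] .
    have Z_le: "?Z \<le> ?Z'"
      using less.prems em_weight_pos[of e R]
      by (intro sum_mono) (simp add: em_weight_insert)
    then have Z_inv: "1 / ?Z' \<le> 1 / ?Z" using Z by (simp add: frac_le)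
    have "mech_prob e F (insert x R) P = (\<Sum>S\<in>F. em_weight e (insert x R) S / ?Z' * ?M (insert x R) S)"
      by (rule mech_prob_first_step[OF less.prems(1) False])
    also have "\<dots> \<le> (\<Sum>S\<in>F. exp e * (em_weight e R S / ?Z * ?M R S))"
    proof (rule sum_mono)
      fix S assume S: "S \<in> F"
      have w: "em_weight e R S > 0" by (rule em_weight_pos)
      show "em_weight e (insert x R) S / ?Z' * ?M (insert x R) S \<le> exp e * (em_weight e R S / ?Z * ?M R S)"
      proof (cases "x \<in> S")
        case True
        then have "insert x R - S = R - S" by auto
        then have "em_weight e (insert x R) S / ?Z' * ?M (insert x R) S = exp e * (em_weight e R S * (1 / ?Z') * ?M R S)"
          using True less.prems by (simp add: em_weight_insert)
        also have "\<dots> \<le> exp e * (em_weight e R S * (1 / ?Z) * ?M R S)"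
          using Z_inv w by (intro mult_left_mono mult_right_mono) (auto simp: mech_prob_nonneg)
        finally show ?thesis by simp
      next
        case False
        then have "insert x R - S = insert x (R - S)" by auto
        moreover have "card (F - {S}) < card F" using S less.prems by (intro card_Diff1_less)
        ultimately have IH: "?M (insert x R) S \<le> exp e * ?M R S"
          using less.prems by (simp add: less.hyps)
        have "em_weight e (insert x R) S / ?Z' * ?M (insert x R) S = em_weight e R S * (1 / ?Z') * ?M (insert x R) S"
          using False less.prems by (simp add: em_weight_insert)
        also have "\<dots> \<le> em_weight e R S * (1 / ?Z) * (exp e * ?M R S)"
          using Z_inv w IH Z Z_le by (intro mult_mono) (auto simp: mech_prob_nonneg)
        finally show ?thesis by (simp add: mult_ac)
      qed
    qed
    also have "\<dots> = exp e * mech_prob e F R P"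
      by (simp add: mech_prob_first_step[OF less.prems(1) False] sum_distrib_left)
    finally show ?thesis .
  qed
qed

lemma weighted_average_reweight_le:
  fixes w w' u v :: "'b \<Rightarrow> real"
  assumes "finite F" "F \<noteq> {}" "\<And>S. S \<in> F \<Longrightarrow> 0 < w S" "0 \<le> a" "1 \<le> K"
    and w'_def: "w' = (\<lambda>S. if S \<in> X then (1 + a) * w S else w S)"
    and p_def: "p = sum w (F \<inter> X) / sum w F"
    and v_nonneg: "\<And>S. S \<in> F \<Longrightarrow> 0 \<le> v S"
    and marked: "\<And>S. S \<in> F \<inter> X \<Longrightarrow> u S \<le> v S"
    and unmarked: "\<And>S. S \<in> F - X \<Longrightarrow> u S \<le> K / (1 + a * p) * v S + c"
  shows "(\<Sum>S\<in>F. w S / sum w F * u S) \<le> K * (\<Sum>S\<in>F. w' S / sum w' F * v S) + (1 - p) * c"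
proof -
  define Z where "Z = sum w F"
  have Z: "0 < Z" unfolding Z_def using assms(1-3) by (intro sum_pos) auto
  have "sum w (F \<inter> X) \<le> Z"
    unfolding Z_def using assms(1,3) by (intro sum_mono2) (auto intro: less_imp_le)
  moreover have "0 \<le> sum w (F \<inter> X)"
    using assms(3) by (intro sum_nonneg) (auto intro: less_imp_le)
  ultimately have p: "0 \<le> p" "p \<le> 1" unfolding p_def Z_def[symmetric] using Z by auto
  have "sum w' F = Z + a * sum w (F \<inter> X)"
    unfolding w'_def Z_def sum.inter_restrict[OF assms(1)] sum_distrib_left sum.distrib[symmetric]
    by (intro sum.cong) (auto simp: algebra_simps)
  then have Z': "sum w' F = (1 + a * p) * Z" unfolding p_def Z_def[symmetric] using Z by (simp add: field_simps)
  have q: "0 < 1 + a * p" using p assms(4) by (simp add: add_pos_nonneg)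
  have "a * p \<le> a" using p assms(4) by (simp add: mult_left_le)
  then have q_le: "1 + a * p \<le> K * (1 + a)" using assms(4,5) by (smt (verit) mult_le_cancel_right1)
  have step: "w S / Z * u S \<le> K * (w' S / sum w' F * v S) + (if S \<in> X then 0 else c * (w S / Z))"
    if S: "S \<in> F" for S
  proof (cases "S \<in> X")
    case True
    have "w S / Z * u S \<le> w S / Z * v S"
      using marked[of S] S True Z assms(3)[OF S] by (intro mult_left_mono) auto
    also have "\<dots> \<le> K * (1 + a) / (1 + a * p) * (w S / Z) * v S"
      using q_le q Z assms(3)[OF S] v_nonneg[OF S]
      by (intro mult_right_mono) (simp_all add: mult_le_cancel_right1 le_divide_eq)
    finally show ?thesis using True unfolding Z' by (simp add: w'_def mult_ac)
  next
    case False
    have "w S / Z * u S \<le> w S / Z * (K / (1 + a * p) * v S + c)"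
      using unmarked[of S] S False Z assms(3)[OF S] by (intro mult_left_mono) auto
    also have "\<dots> = K * (w S / ((1 + a * p) * Z) * v S) + c * (w S / Z)"
      by (simp add: ring_distribs mult_ac)
    finally show ?thesis using False unfolding Z' by (simp add: w'_def)
  qed
  have "(\<Sum>S\<in>F. c * (w S / Z))
      = (\<Sum>S\<in>F. if S \<in> X then c * (w S / Z) else 0) + (\<Sum>S\<in>F. if S \<in> X then 0 else c * (w S / Z))"
    by (subst sum.distrib[symmetric]) (rule sum.cong; simp)
  moreover have "(\<Sum>S\<in>F. c * (w S / Z)) = c"
    using Z by (simp add: Z_def sum_distrib_left[symmetric] sum_divide_distrib[symmetric])
  moreover have "(\<Sum>S\<in>F. if S \<in> X then c * (w S / Z) else 0) = c * p"
    unfolding p_def Z_def[symmetric] sum.inter_restrict[OF assms(1), symmetric]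
    by (simp add: sum_distrib_left[symmetric] sum_divide_distrib[symmetric])
  ultimately have rest: "(\<Sum>S\<in>F. if S \<in> X then 0 else c * (w S / Z)) = (1 - p) * c"
    by (simp add: algebra_simps)
  have "(\<Sum>S\<in>F. w S / Z * u S)
      \<le> (\<Sum>S\<in>F. K * (w' S / sum w' F * v S) + (if S \<in> X then 0 else c * (w S / Z)))"
    using step by (rule sum_mono)
  also have "\<dots> = K * (\<Sum>S\<in>F. w' S / sum w' F * v S) + (1 - p) * c"
    by (simp add: sum.distrib sum_distrib_left rest)
  finally show ?thesis unfolding Z_def .
qed

lemma one_minus_mult_powr_div_le:
  fixes a p K :: real
  assumes "0 < a" "0 \<le> p" "p \<le> 1" "0 < K"
  shows "(1 - p) * (K / (1 + a * p)) powr (-1 / a) \<le> K powr (-1 / a)"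
proof -
  have q: "0 < 1 + a * p" using assms by (simp add: add_pos_nonneg)
  have "ln (1 + a * p) \<le> a * p" using assms by (intro ln_add_one_self_le_self) simp
  then have "(1 + a * p) powr (1 / a) \<le> exp p"
    using q assms(1) by (simp add: powr_def divide_le_eq mult.commute)
  moreover have "(1 - p) * exp p \<le> 1"
    using exp_ge_add_one_self[of "-p"] mult_right_mono[of "1 - p" "exp (-p)" "exp p"]
    by (simp add: exp_minus)
  ultimately have bound: "(1 - p) * (1 + a * p) powr (1 / a) \<le> 1"
    using assms(3) by (smt (verit) mult_left_mono)
  have "(K / (1 + a * p)) powr (-1 / a) = K powr (-1 / a) / (1 + a * p) powr (-1 / a)"
    using q assms(4) by (simp add: powr_divide)
  also have "(1 + a * p) powr (-1 / a) = inverse ((1 + a * p) powr (1 / a))"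
    by (metis minus_divide_left powr_minus)
  finally have "(K / (1 + a * p)) powr (-1 / a) = K powr (-1 / a) * (1 + a * p) powr (1 / a)"
    by (simp add: divide_inverse)
  then show ?thesis
    using mult_left_mono[OF bound, of "K powr (-1 / a)"] by (simp add: mult_ac)
qed

lemma mech_prob_remove_le:
  assumes "finite F" "finite R" "x \<notin> R" "0 < e" "0 < K"
  shows "mech_prob e F R P \<le> K * mech_prob e F (insert x R) P + K powr (-1 / (exp e - 1))"
  using assms
proof (induction "card F" arbitrary: F R P K rule: less_induct)
  case less
  define a where "a = exp e - 1"
  have a: "0 < a" unfolding a_def using less.prems(4) by simp
  have M_nonneg: "0 \<le> K * mech_prob e F (insert x R) P"
    using less.prems(5) mech_prob_nonneg[of e F "insert x R" P] by simp
  consider "K < 1" | "1 \<le> K" "F = {}" | "1 \<le> K" "F \<noteq> {}" by linarith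
  then show ?case
  proof cases
    case 1
    have "0 \<le> -1 / a * ln K" using 1 a less.prems(5) by (intro mult_nonpos_nonpos) auto
    then have "1 \<le> K powr (-1 / a)" using less.prems(5) by (simp add: powr_def)
    then show ?thesis
      using mech_prob_le_1[OF less.prems(1), of e R P] M_nonneg unfolding a_def by linarith
  next
    case 2
    then have "mech_prob e F R P \<le> K * mech_prob e F (insert x R) P"
      by (simp add: mech_prob_empty_family)
    then show ?thesis by (intro add_increasing2) auto
  next
    case 3
    define w where "w = em_weight e R"
    define p where "p = sum w (F \<inter> {S. x \<in> S}) / sum w F"
    define K' where "K' = K / (1 + a * p)"
    let ?M = "\<lambda>R S. mech_prob e (F - {S}) (R - S) {ys. S # ys \<in> P}"
    have w_nonneg: "0 \<le> w S" for S unfolding w_def using em_weight_pos by (rule less_imp_le)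
    have "0 \<le> p" unfolding p_def by (intro divide_nonneg_nonneg sum_nonneg w_nonneg)
    have "sum w (F \<inter> {S. x \<in> S}) \<le> sum w F"
      using less.prems(1) w_nonneg by (intro sum_mono2) auto
    then have "p \<le> 1"
      unfolding p_def w_def using sum_em_weight_pos[OF less.prems(1) 3(2), of e R] by simp
    have K': "0 < K'" unfolding K'_def using less.prems(5) a \<open>0 \<le> p\<close> by (simp add: add_pos_nonneg)
    have weight_insert: "em_weight e (insert x R) = (\<lambda>S. if S \<in> {S. x \<in> S} then (1 + a) * w S else w S)"
      using less.prems(2,3) by (auto simp: em_weight_insert a_def w_def)
    have "mech_prob e F R P = (\<Sum>S\<in>F. w S / sum w F * ?M R S)"
      unfolding w_def by (rule mech_prob_first_step[OF less.prems(1) 3(2)])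
    also have "\<dots> \<le> K * (\<Sum>S\<in>F. em_weight e (insert x R) S / sum (em_weight e (insert x R)) F
                          * ?M (insert x R) S) + (1 - p) * K' powr (-1 / a)"
    proof (rule weighted_average_reweight_le[OF less.prems(1) 3(2) _ _ 3(1) weight_insert p_def])
      fix S assume S: "S \<in> F - {S. x \<in> S}"
      then have "insert x R - S = insert x (R - S)" by auto
      moreover have "card (F - {S}) < card F" using less.prems(1) S by (intro card_Diff1_less) auto
      ultimately have "?M R S \<le> K' * ?M (insert x R) S + K' powr (-1 / a)"
        using less.hyps[of "F - {S}" "R - S" K'] less.prems K' unfolding a_def by simp
      then show "?M R S \<le> K / (1 + a * p) * ?M (insert x R) S + K' powr (-1 / a)"
        unfolding K'_def .
    next
      fix S assume "S \<in> F \<inter> {S. x \<in> S}"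
      then show "?M R S \<le> ?M (insert x R) S" by simp
    qed (use a in \<open>simp_all add: w_def em_weight_pos mech_prob_nonneg\<close>)
    also have "\<dots> = K * mech_prob e F (insert x R) P + (1 - p) * (K / (1 + a * p)) powr (-1 / a)"
      by (simp add: mech_prob_first_step[OF less.prems(1) 3(2)] K'_def)
    also have "\<dots> \<le> K * mech_prob e F (insert x R) P + K powr (-1 / a)"
      using one_minus_mult_powr_div_le[OF a \<open>0 \<le> p\<close> \<open>p \<le> 1\<close> less.prems(5)] by simp
    finally show ?thesis unfolding a_def .
  qed
qed

lemma privacy_parameter_bounds:
  fixes \<epsilon> \<delta> \<epsilon>' :: real
  assumes "0 < \<epsilon>" "\<epsilon> < 1" "0 < \<delta>" "\<delta> < 1 / exp 1" "\<epsilon>' = \<epsilon> / (2 * ln (exp 1 / \<delta>))"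
  shows "0 < \<epsilon>'" "\<epsilon>' \<le> \<epsilon>" "exp \<epsilon> powr (-1 / (exp \<epsilon>' - 1)) \<le> \<delta>"
proof -
  define L where "L = ln (exp 1 / \<delta>)"
  have L: "L = 1 - ln \<delta>" unfolding L_def using assms(3) by (simp add: ln_div)
  have "ln \<delta> < ln (1 / exp 1)" using assms(3,4) by simp
  then have "2 < L" using L by (simp add: ln_div)
  have \<epsilon>': "\<epsilon>' = \<epsilon> / (2 * L)" using assms(5) L_def by simp
  show "0 < \<epsilon>'" "\<epsilon>' \<le> \<epsilon>" using \<epsilon>' \<open>2 < L\<close> assms(1) by (auto simp: divide_le_eq)
  have "\<epsilon>' \<le> 1 / 2" unfolding \<epsilon>' using \<open>2 < L\<close> assms(1,2) by (simp add: divide_le_eq)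
  define a where "a = exp \<epsilon>' - 1"
  have "0 < a" unfolding a_def using \<open>0 < \<epsilon>'\<close> by simp
  have "exp \<epsilon>' \<le> 1 + 2 * \<epsilon>'" using real_exp_bound_lemma \<open>0 < \<epsilon>'\<close> \<open>\<epsilon>' \<le> 1 / 2\<close> by simp
  then have "a * L \<le> \<epsilon>" unfolding a_def \<epsilon>' using \<open>2 < L\<close> by (simp add: field_simps)
  then have "- ln \<delta> * a \<le> \<epsilon>" using \<open>0 < a\<close> unfolding L by (simp add: algebra_simps)
  then have "- ln \<delta> \<le> \<epsilon> / a" using \<open>0 < a\<close> by (simp add: le_divide_eq)
  then have "-1 / a * \<epsilon> \<le> ln \<delta>" by simp
  then have "exp (-1 / a * \<epsilon>) \<le> \<delta>" using assms(3) by (metis exp_le_cancel_iff exp_ln)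
  then show "exp \<epsilon> powr (-1 / (exp \<epsilon>' - 1)) \<le> \<delta>" unfolding a_def by (simp add: powr_def)
qed

theorem mainTheorem10:
  fixes U :: "'a set" and \<S> :: "'a set set" and m :: nat
    and \<epsilon> \<delta> \<epsilon>' :: real and A B :: "'a set" and P :: "'a set list set"
  assumes "finite U"
    and "\<S> \<subseteq> Pow U"
    and "card \<S> = m"
    and "0 < \<epsilon>" and "\<epsilon> < 1"
    and "0 < \<delta>" and "\<delta> < 1 / exp 1"
    and "\<epsilon>' = \<epsilon> / (2 * ln (exp 1 / \<delta>))"
    and "A \<subseteq> U" and "B \<subseteq> U"
    and "card ((A - B) \<union> (B - A)) = 1"
  shows "mech_prob \<epsilon>' \<S> A P \<le> exp \<epsilon> * mech_prob \<epsilon>' \<S> B P + \<delta>"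
proof -
  have fin: "finite \<S>" "finite A" "finite B"
    using assms(1,2,9,10) by (meson finite_Pow_iff finite_subset)+
  note \<epsilon>' = privacy_parameter_bounds[OF assms(4-8)]
  obtain x where "(A - B) \<union> (B - A) = {x}" using assms(11) card_1_singletonE by blast
  then have "x \<in> A - B \<or> x \<in> B - A" "A - B \<subseteq> {x}" "B - A \<subseteq> {x}" by auto
  then consider "A = insert x B" "x \<notin> B" | "B = insert x A" "x \<notin> A" by blast
  then show ?thesis
  proof cases
    case 1
    have "mech_prob \<epsilon>' \<S> A P \<le> exp \<epsilon>' * mech_prob \<epsilon>' \<S> B P"
      using 1 mech_prob_insert_le[OF fin(1,3) 1(2)] \<epsilon>'(1) by simp
    also have "\<dots> \<le> exp \<epsilon> * mech_prob \<epsilon>' \<S> B P"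
      using \<epsilon>'(2) mech_prob_nonneg by (intro mult_right_mono) auto
    finally show ?thesis using assms(6) by simp
  next
    case 2
    then show ?thesis
      using mech_prob_remove_le[OF fin(1,2) 2(2) \<epsilon>'(1), of "exp \<epsilon>" P] \<epsilon>'(3) by simp
  qed
qed

end
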